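(* For every integer $m\ge1$ and every smooth closed immersed planar curve $\gamma$, $$E_m[\gamma]\le\frac1{2m+1}L[\gamma]^{3/2}\|\mathcal K_m\|_{L^2(\gamma)},$$ equivalently $L[\gamma]^{2m+1}E_m[\gamma]\le\frac1{2m+1}L[\gamma]^{2m+5/2}\|\mathcal K_m\|_{L^2(\gamma)}$.
   Context: $s$ arclength, $k$ signed curvature, $k_{s^j}$ its $j$-th arclength derivative, $L[\gamma]$ length, $E_m[\gamma]=\frac12\int_\gamma k_{s^m}^2ds$, $\mathcal K_m=(-1)^{m+1}k_{s^{2m+2}}-\tfrac12 k\,k_{s^m}^2+k\sum_{r=1}^m(-1)^{r+1}k_{s^{m-r}}k_{s^{m+r}}$, and $\|\cdot\|_{L^2(\gamma)}$ is taken with respect to $ds$. *)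

theory Defs
  imports "HOL-Analysis.Analysis"
begin

text \<open>A planar curve is given by its coordinate functions x, y :: real => real,
 parametrised over the circle R/Z, i.e. 1-periodic.\<close>

definition smooth_fun :: "(real \<Rightarrow> real) \<Rightarrow> bool" where
  "smooth_fun f \<longleftrightarrow> (\<forall>n t. (deriv ^^ n) f differentiable (at t))"

definition smooth_closed_immersed :: "(real \<Rightarrow> real) \<Rightarrow> (real \<Rightarrow> real) \<Rightarrow> bool" where
  "smooth_closed_immersed x y \<longleftrightarrow>
     smooth_fun x \<and> smooth_fun y \<and>
     (\<forall>t. x (t + 1) = x t \<and> y (t + 1) = y t) \<and>
     (\<forall>t. (deriv x t, deriv y t) \<noteq> (0, 0))"

definition speed :: "(real \<Rightarrow> real) \<Rightarrow> (real \<Rightarrow> real) \<Rightarrow> real \<Rightarrow> real" where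
  "speed x y t = sqrt ((deriv x t)\<^sup>2 + (deriv y t)\<^sup>2)"

definition curv :: "(real \<Rightarrow> real) \<Rightarrow> (real \<Rightarrow> real) \<Rightarrow> real \<Rightarrow> real" where
  "curv x y t = (deriv x t * deriv (deriv y) t - deriv y t * deriv (deriv x) t) / (speed x y t) ^ 3"

fun curv_s :: "(real \<Rightarrow> real) \<Rightarrow> (real \<Rightarrow> real) \<Rightarrow> nat \<Rightarrow> real \<Rightarrow> real" where
  "curv_s x y 0 = curv x y"
| "curv_s x y (Suc j) = (\<lambda>t. deriv (curv_s x y j) t / speed x y t)"

definition int_ds :: "(real \<Rightarrow> real) \<Rightarrow> (real \<Rightarrow> real) \<Rightarrow> (real \<Rightarrow> real) \<Rightarrow> real" where
  "int_ds x y f = integral {0..1} (\<lambda>t. f t * speed x y t)"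

definition curve_length :: "(real \<Rightarrow> real) \<Rightarrow> (real \<Rightarrow> real) \<Rightarrow> real" where
  "curve_length x y = int_ds x y (\<lambda>_. 1)"

definition energy :: "nat \<Rightarrow> (real \<Rightarrow> real) \<Rightarrow> (real \<Rightarrow> real) \<Rightarrow> real" where
  "energy m x y = 1/2 * int_ds x y (\<lambda>t. (curv_s x y m t)\<^sup>2)"

definition Kop :: "nat \<Rightarrow> (real \<Rightarrow> real) \<Rightarrow> (real \<Rightarrow> real) \<Rightarrow> real \<Rightarrow> real" where
  "Kop m x y t =
     (-1) ^ (m + 1) * curv_s x y (2 * m + 2) t
     - 1/2 * curv x y t * (curv_s x y m t)\<^sup>2
     + curv x y t * (\<Sum>r = 1..m. (-1) ^ (r + 1) * curv_s x y (m - r) t * curv_s x y (m + r) t)"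

definition L2_ds :: "(real \<Rightarrow> real) \<Rightarrow> (real \<Rightarrow> real) \<Rightarrow> (real \<Rightarrow> real) \<Rightarrow> real" where
  "L2_ds x y f = sqrt (int_ds x y (\<lambda>t. (f t)\<^sup>2))"

end

(* Write D = d/ds and let p and q (normal_part and tangent_part) be the components of
   gamma - gamma(0) along the unit normal nu = (-D y, D x) and the unit tangent (D x, D y).
   The Frenet equations give D p = -k q and D q = 1 + k p.  The field gamma - gamma(0) generates
   dilations, under which E_m scales like L^(-(2m+1)); correspondingly the integral of K_m p ds
   equals (2m+1) E_m.  This identity is verified directly by repeated integration by parts over
   the closed curve, organised through the variations N_j (curv_s_variation j) of the k_(s^j)
   along p, which satisfy N_0 = D^2 p + k^2 p and N_(j+1) = D N_j + k p k_(s^(j+1)).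
   Since |gamma(t) - gamma(0)| <= L, we have |p| <= L and hence ||p||_L2 <= L^(3/2);
   Cauchy-Schwarz now gives the estimate. *)

theory Submission
  imports Defs
begin

lemma deriv_periodic:
  fixes f :: "real \<Rightarrow> real"
  assumes "\<And>t. f (t + c) = f t"
  shows "deriv f (t + c) = deriv f t"
proof -
  have "(\<lambda>s. f (s + c)) = f" using assms by auto
  then show ?thesis by (simp add: deriv_def DERIV_shift)
qed

lemma funpow_deriv_periodic:
  fixes f :: "real \<Rightarrow> real"
  assumes "\<And>t. f (t + c) = f t"
  shows "(deriv ^^ n) f (t + c) = (deriv ^^ n) f t"
  by (induction n arbitrary: t) (simp_all add: assms deriv_periodic)

lemma le_sqrt_mult_sqrt_if_quadratic_nonneg:
  fixes A B J :: real
  assumes quadratic: "\<And>c. 0 \<le> A - 2 * c * J + c\<^sup>2 * B" and "B \<ge> 0"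
  shows "J \<le> sqrt A * sqrt B"
proof (cases "B = 0")
  case True
  have "J = 0"
  proof (rule ccontr)
    assume "J \<noteq> 0"
    then show False using quadratic[of "(A + 1) / (2 * J)"] True by (simp add: field_simps)
  qed
  then show ?thesis using True by simp
next
  case False
  then have "J\<^sup>2 \<le> A * B"
    using quadratic[of "J / B"] \<open>B \<ge> 0\<close> by (simp add: field_simps power2_eq_square)
  then show ?thesis by (metis abs_ge_self order_trans real_le_rsqrt real_sqrt_mult real_sqrt_abs)
qed

lemma frenet_identity:
  fixes a b c d s :: real
  assumes "s > 0" and "s\<^sup>2 = a\<^sup>2 + b\<^sup>2"
  shows "c / s * (1 / s) + a * (- (a * c + b * d) * (1 / s) ^ 4) = - ((a * d - b * c) / s ^ 3) * (b / s)"
proof -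
  have "c * s\<^sup>2 - a * (a * c + b * d) = - (a * d - b * c) * b"
    unfolding assms(2) by algebra
  then show ?thesis
    using assms(1) by (simp add: field_simps power2_eq_square eval_nat_numeral)
qed

lemma unit_combination_le_sqrt:
  fixes a b u v :: real
  assumes "a\<^sup>2 + b\<^sup>2 = 1"
  shows "a * u + b * v \<le> sqrt (u\<^sup>2 + v\<^sup>2)"
  using Cauchy_Schwarz_ineq2[of "(a, b)" "(u, v)"] assms by (simp add: norm_Pair)

definition arc_deriv :: "(real \<Rightarrow> real) \<Rightarrow> (real \<Rightarrow> real) \<Rightarrow> (real \<Rightarrow> real) \<Rightarrow> real \<Rightarrow> real" where
  "arc_deriv x y f = (\<lambda>t. deriv f t / speed x y t)"

lemma curv_s_eq_funpow_arc_deriv: "curv_s x y j = (arc_deriv x y ^^ j) (curv x y)"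
  by (induction j) (simp_all add: arc_deriv_def)

lemma curv_s_Suc_arc_deriv: "curv_s x y (Suc j) = arc_deriv x y (curv_s x y j)"
  by (simp add: arc_deriv_def)

declare curv_s.simps(2) [simp del]

(* Rather than with all smooth periodic functions we work in the algebra generated by the
   derivatives of the coordinates and 1/|gamma'|: it contains every function that occurs, and its
   closure under deriv is a single induction, avoiding the Leibniz rule for higher derivatives. *)
inductive_set curve_algebra :: "(real \<Rightarrow> real) \<Rightarrow> (real \<Rightarrow> real) \<Rightarrow> (real \<Rightarrow> real) set"
  for x y where
  deriv_x: "(deriv ^^ n) x \<in> curve_algebra x y"
| deriv_y: "(deriv ^^ n) y \<in> curve_algebra x y"
| const: "(\<lambda>t. c) \<in> curve_algebra x y"
| inverse_speed: "(\<lambda>t. 1 / speed x y t) \<in> curve_algebra x y"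
| add: "f \<in> curve_algebra x y \<Longrightarrow> g \<in> curve_algebra x y \<Longrightarrow> (\<lambda>t. f t + g t) \<in> curve_algebra x y"
| mult: "f \<in> curve_algebra x y \<Longrightarrow> g \<in> curve_algebra x y \<Longrightarrow> (\<lambda>t. f t * g t) \<in> curve_algebra x y"

locale closed_curve =
  fixes x y :: "real \<Rightarrow> real"
  assumes smooth_closed_immersed: "smooth_closed_immersed x y"
begin

abbreviation "\<sigma> \<equiv> speed x y"
abbreviation "k \<equiv> curv x y"
abbreviation "D \<equiv> arc_deriv x y"
abbreviation "\<A> \<equiv> curve_algebra x y"

lemma
  shows has_real_derivative_funpow_deriv_x: "((deriv ^^ n) x has_real_derivative (deriv ^^ Suc n) x t) (at t)"
    and has_real_derivative_funpow_deriv_y: "((deriv ^^ n) y has_real_derivative (deriv ^^ Suc n) y t) (at t)"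
  using smooth_closed_immersed
  by (simp_all add: smooth_closed_immersed_def smooth_fun_def DERIV_deriv_iff_real_differentiable)

lemma periodic_x: "x (t + 1) = x t" and periodic_y: "y (t + 1) = y t"
  using smooth_closed_immersed by (simp_all add: smooth_closed_immersed_def)

lemma speed_pos: "\<sigma> t > 0"
  using smooth_closed_immersed
  by (simp add: smooth_closed_immersed_def speed_def sum_power2_gt_zero_iff)

lemma speed_squared: "(\<sigma> t)\<^sup>2 = (deriv x t)\<^sup>2 + (deriv y t)\<^sup>2"
  by (simp add: speed_def)

lemma inverse_speed_has_real_derivative:
  "((\<lambda>t. 1 / \<sigma> t) has_real_derivative
     - (deriv x t * (deriv ^^ 2) x t + deriv y t * (deriv ^^ 2) y t) * (1 / \<sigma> t) ^ 3) (at t)"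
proof -
  have "((\<lambda>t. 1 / \<sigma> t) has_real_derivative
     - (inverse (\<sigma> t) / 2 * (2 * deriv x t * (deriv ^^ 2) x t + 2 * deriv y t * (deriv ^^ 2) y t))
       / (\<sigma> t)\<^sup>2) (at t)"
    unfolding speed_def
    using speed_pos[of t] has_real_derivative_funpow_deriv_x[of 1 t] has_real_derivative_funpow_deriv_y[of 1 t]
    by (auto intro!: derivative_eq_intros simp: numeral_2_eq_2 speed_def)
  then show ?thesis
    by (rule DERIV_cong) (use speed_pos[of t] in \<open>simp add: field_simps power2_eq_square power3_eq_cube\<close>)
qed

lemma curve_algebra_cmult: "f \<in> \<A> \<Longrightarrow> (\<lambda>t. c * f t) \<in> \<A>"
  by (rule curve_algebra.mult[OF curve_algebra.const])

lemma curve_algebra_minus: "f \<in> \<A> \<Longrightarrow> (\<lambda>t. - f t) \<in> \<A>"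
  using curve_algebra_cmult[of f "-1"] by simp

lemma curve_algebra_diff: "f \<in> \<A> \<Longrightarrow> g \<in> \<A> \<Longrightarrow> (\<lambda>t. f t - g t) \<in> \<A>"
  using curve_algebra.add[OF _ curve_algebra_minus, of f g] by simp

lemma curve_algebra_power: "f \<in> \<A> \<Longrightarrow> (\<lambda>t. f t ^ n) \<in> \<A>"
  by (induction n) (simp_all add: curve_algebra.const curve_algebra.mult)

lemma curve_algebra_sum: "(\<And>i. F i \<in> \<A>) \<Longrightarrow> (\<lambda>t. \<Sum>i\<in>S. F i t) \<in> \<A>"
  by (induction S rule: infinite_finite_induct) (simp_all add: curve_algebra.const curve_algebra.add)

lemma
  shows curve_algebra_x: "x \<in> \<A>" and curve_algebra_y: "y \<in> \<A>"
    and curve_algebra_deriv_x: "deriv x \<in> \<A>" and curve_algebra_deriv_y: "deriv y \<in> \<A>"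
  using curve_algebra.deriv_x[of 0] curve_algebra.deriv_y[of 0]
    curve_algebra.deriv_x[of 1] curve_algebra.deriv_y[of 1] by simp_all

lemmas curve_algebra_intros = curve_algebra.intros curve_algebra_cmult curve_algebra_minus
  curve_algebra_diff curve_algebra_power curve_algebra_sum
  curve_algebra_x curve_algebra_y curve_algebra_deriv_x curve_algebra_deriv_y

lemma speed_periodic: "\<sigma> (t + 1) = \<sigma> t"
  by (simp add: speed_def deriv_periodic periodic_x periodic_y)

lemma curve_algebra_smooth_periodic:
  assumes "f \<in> \<A>"
  shows "(\<forall>t. (f has_real_derivative deriv f t) (at t)) \<and> deriv f \<in> \<A> \<and> (\<forall>t. f (t + 1) = f t)"
  using assms
proof (induction rule: curve_algebra.induct)
  case (deriv_x n)
  then show ?case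
    using has_real_derivative_funpow_deriv_x curve_algebra.deriv_x[of "Suc n"]
      funpow_deriv_periodic[of x, OF periodic_x]
    by (simp add: DERIV_imp_deriv)
next
  case (deriv_y n)
  then show ?case
    using has_real_derivative_funpow_deriv_y curve_algebra.deriv_y[of "Suc n"]
      funpow_deriv_periodic[of y, OF periodic_y]
    by (simp add: DERIV_imp_deriv)
next
  case (const c)
  have "deriv (\<lambda>t. c) = (\<lambda>t. 0)" by (rule ext) simp
  then show ?case by (simp add: curve_algebra.const)
next
  case inverse_speed
  have "deriv (\<lambda>t. 1 / \<sigma> t) =
      (\<lambda>t. - (deriv x t * (deriv ^^ 2) x t + deriv y t * (deriv ^^ 2) y t) * (1 / \<sigma> t) ^ 3)"
    using inverse_speed_has_real_derivative by (intro ext DERIV_imp_deriv)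
  moreover have "\<dots> \<in> \<A>" by (intro curve_algebra_intros)
  ultimately show ?case using inverse_speed_has_real_derivative speed_periodic by simp
next
  case (add f g)
  have derivative: "((\<lambda>t. f t + g t) has_real_derivative deriv f t + deriv g t) (at t)" for t
    using add.IH by (intro DERIV_add) auto
  then have "deriv (\<lambda>t. f t + g t) = (\<lambda>t. deriv f t + deriv g t)"
    by (intro ext DERIV_imp_deriv)
  with derivative add.IH show ?case by (simp add: curve_algebra.add)
next
  case (mult f g)
  have derivative: "((\<lambda>t. f t * g t) has_real_derivative deriv f t * g t + f t * deriv g t) (at t)" for t
    using mult.IH by (auto intro!: derivative_eq_intros)
  then have "deriv (\<lambda>t. f t * g t) = (\<lambda>t. deriv f t * g t + f t * deriv g t)"
    by (intro ext DERIV_imp_deriv)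
  with derivative mult show ?case by (simp add: curve_algebra.add curve_algebra.mult)
qed

lemma curve_algebra_has_real_derivative: "f \<in> \<A> \<Longrightarrow> (f has_real_derivative deriv f t) (at t)"
  and curve_algebra_deriv: "f \<in> \<A> \<Longrightarrow> deriv f \<in> \<A>"
  and curve_algebra_periodic: "f \<in> \<A> \<Longrightarrow> f (t + 1) = f t"
  using curve_algebra_smooth_periodic by blast+

lemma curve_algebra_continuous_on: "f \<in> \<A> \<Longrightarrow> continuous_on S f"
  by (meson DERIV_isCont curve_algebra_has_real_derivative continuous_at_imp_continuous_on)

lemma curve_algebra_speed: "\<sigma> \<in> \<A>"
proof -
  have "\<sigma> = (\<lambda>t. ((deriv x t)\<^sup>2 + (deriv y t)\<^sup>2) * (1 / \<sigma> t))"
    unfolding speed_squared[symmetric] using speed_pos by (simp add: power2_eq_square)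
  also have "\<dots> \<in> \<A>" by (intro curve_algebra_intros)
  finally show ?thesis .
qed

lemma arc_deriv_eq: "D f = (\<lambda>t. deriv f t * (1 / \<sigma> t))"
  by (simp add: arc_deriv_def)

lemma curve_algebra_arc_deriv: "f \<in> \<A> \<Longrightarrow> D f \<in> \<A>"
  unfolding arc_deriv_eq by (intro curve_algebra_intros curve_algebra_deriv)

lemma curve_algebra_funpow_arc_deriv: "f \<in> \<A> \<Longrightarrow> (D ^^ n) f \<in> \<A>"
  by (induction n) (simp_all add: curve_algebra_arc_deriv)

lemma curv_eq: "k t = (deriv x t * (deriv ^^ 2) y t - deriv y t * (deriv ^^ 2) x t) * (1 / \<sigma> t) ^ 3"
  by (simp add: curv_def numeral_2_eq_2 power_one_over)

lemma curve_algebra_curv: "k \<in> \<A>"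
  unfolding curv_eq[abs_def] by (intro curve_algebra_intros)

lemma curve_algebra_curv_s: "curv_s x y j \<in> \<A>"
  unfolding curv_s_eq_funpow_arc_deriv by (intro curve_algebra_funpow_arc_deriv curve_algebra_curv)

lemma arc_deriv_add: "f \<in> \<A> \<Longrightarrow> g \<in> \<A> \<Longrightarrow> D (\<lambda>t. f t + g t) = (\<lambda>t. D f t + D g t)"
  unfolding arc_deriv_def
  by (intro ext, subst DERIV_imp_deriv[OF DERIV_add])
    (simp_all add: add_divide_distrib curve_algebra_has_real_derivative)

lemma arc_deriv_mult: "f \<in> \<A> \<Longrightarrow> g \<in> \<A> \<Longrightarrow> D (\<lambda>t. f t * g t) = (\<lambda>t. D f t * g t + f t * D g t)"
  unfolding arc_deriv_def
  by (intro ext, subst DERIV_imp_deriv[OF DERIV_mult[OF curve_algebra_has_real_derivative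
        curve_algebra_has_real_derivative]]) (simp_all add: add_divide_distrib)

lemma arc_deriv_const: "D (\<lambda>t. c) = (\<lambda>t. 0)"
  by (simp add: arc_deriv_def)

lemma arc_deriv_cmult: "f \<in> \<A> \<Longrightarrow> D (\<lambda>t. c * f t) = (\<lambda>t. c * D f t)"
  using arc_deriv_mult[OF curve_algebra.const, of f c] by (simp add: arc_deriv_const)

lemma arc_deriv_minus: "f \<in> \<A> \<Longrightarrow> D (\<lambda>t. - f t) = (\<lambda>t. - D f t)"
  using arc_deriv_cmult[of f "-1"] by simp

lemma arc_deriv_diff: "f \<in> \<A> \<Longrightarrow> g \<in> \<A> \<Longrightarrow> D (\<lambda>t. f t - g t) = (\<lambda>t. D f t - D g t)"
  using arc_deriv_add[OF _ curve_algebra_minus, of f g] by (simp add: arc_deriv_minus)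

section \<open>Frenet equations\<close>

lemma unit_tangent: "(D x t)\<^sup>2 + (D y t)\<^sup>2 = 1"
  using speed_pos[of t]
  by (simp add: arc_deriv_def power_divide add_divide_distrib[symmetric] speed_squared[symmetric])

lemma arc_deriv_inverse_speed:
  "D (\<lambda>t. 1 / \<sigma> t) t = - (deriv x t * (deriv ^^ 2) x t + deriv y t * (deriv ^^ 2) y t) * (1 / \<sigma> t) ^ 4"
  by (simp add: arc_deriv_def DERIV_imp_deriv[OF inverse_speed_has_real_derivative] power_one_over eval_nat_numeral)

lemma frenet_x: "D (D x) = (\<lambda>t. - k t * D y t)"
proof
  fix t
  have "D (D x) t = D (deriv x) t * (1 / \<sigma> t) + deriv x t * D (\<lambda>t. 1 / \<sigma> t) t"
    by (subst arc_deriv_eq, subst arc_deriv_mult) (simp_all add: curve_algebra_intros)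
  also have "\<dots> = - k t * D y t"
    unfolding arc_deriv_inverse_speed curv_def
    using frenet_identity[OF speed_pos speed_squared]
    by (simp add: arc_deriv_def numeral_2_eq_2)
  finally show "D (D x) t = - k t * D y t" .
qed

lemma frenet_y: "D (D y) = (\<lambda>t. k t * D x t)"
proof
  fix t
  have "D (D y) t = D (deriv y) t * (1 / \<sigma> t) + deriv y t * D (\<lambda>t. 1 / \<sigma> t) t"
    by (subst arc_deriv_eq, subst arc_deriv_mult) (simp_all add: curve_algebra_intros)
  also have "\<dots> = - ((deriv y t * (deriv ^^ 2) x t - deriv x t * (deriv ^^ 2) y t) / \<sigma> t ^ 3) * (deriv x t / \<sigma> t)"
    unfolding arc_deriv_inverse_speed
    using frenet_identity[OF speed_pos, of t "deriv y t" "deriv x t" "(deriv ^^ 2) y t" "(deriv ^^ 2) x t"]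
      speed_squared[of t]
    by (simp add: arc_deriv_def numeral_2_eq_2 add.commute)
  also have "\<dots> = k t * D x t"
    using speed_pos[of t] by (simp add: curv_def arc_deriv_def numeral_2_eq_2 field_simps)
  finally show "D (D y) t = k t * D x t" .
qed

definition normal_part :: "real \<Rightarrow> real" where
  "normal_part = (\<lambda>t. (y t - y 0) * D x t - (x t - x 0) * D y t)"

definition tangent_part :: "real \<Rightarrow> real" where
  "tangent_part = (\<lambda>t. (x t - x 0) * D x t + (y t - y 0) * D y t)"

lemma curve_algebra_normal_part: "normal_part \<in> \<A>"
  and curve_algebra_tangent_part: "tangent_part \<in> \<A>"
  unfolding normal_part_def tangent_part_def by (intro curve_algebra_intros curve_algebra_arc_deriv)+

lemmas curve_algebra_closed = curve_algebra_intros curve_algebra_arc_deriv curve_algebra_funpow_arc_deriv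
  curve_algebra_curv curve_algebra_curv_s curve_algebra_normal_part curve_algebra_tangent_part

lemmas arc_deriv_simps = arc_deriv_add arc_deriv_diff arc_deriv_mult arc_deriv_const
  arc_deriv_cmult arc_deriv_minus curve_algebra_closed

lemma arc_deriv_normal_part: "D normal_part = (\<lambda>t. - k t * tangent_part t)"
proof -
  have "D normal_part =
      (\<lambda>t. D y t * D x t + (y t - y 0) * D (D x) t - (D x t * D y t + (x t - x 0) * D (D y) t))"
    unfolding normal_part_def by (simp add: arc_deriv_simps)
  then show ?thesis by (simp add: frenet_x frenet_y tangent_part_def algebra_simps)
qed

lemma arc_deriv_tangent_part: "D tangent_part = (\<lambda>t. 1 + k t * normal_part t)"
proof
  fix t
  have "D tangent_part t = ((D x t)\<^sup>2 + (D y t)\<^sup>2) + (x t - x 0) * D (D x) t + (y t - y 0) * D (D y) t"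
    unfolding tangent_part_def by (simp add: arc_deriv_simps power2_eq_square)
  then show "D tangent_part t = 1 + k t * normal_part t"
    unfolding unit_tangent by (simp add: frenet_x frenet_y normal_part_def algebra_simps)
qed

section \<open>Integration along the curve\<close>

abbreviation "I \<equiv> int_ds x y"

lemma curve_algebra_integrable: "f \<in> \<A> \<Longrightarrow> (\<lambda>t. f t * \<sigma> t) integrable_on {0..1}"
  by (intro integrable_continuous_interval curve_algebra_continuous_on curve_algebra.mult curve_algebra_speed)

lemma int_ds_add: "f \<in> \<A> \<Longrightarrow> g \<in> \<A> \<Longrightarrow> I (\<lambda>t. f t + g t) = I f + I g"
  unfolding int_ds_def by (simp add: distrib_right integral_add curve_algebra_integrable)

lemma int_ds_cmult: "I (\<lambda>t. c * f t) = c * I f"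
  unfolding int_ds_def by (simp add: mult.assoc)

lemma int_ds_diff: "f \<in> \<A> \<Longrightarrow> g \<in> \<A> \<Longrightarrow> I (\<lambda>t. f t - g t) = I f - I g"
  unfolding int_ds_def by (simp add: left_diff_distrib integral_diff curve_algebra_integrable)

lemma int_ds_sum: "(\<And>i. F i \<in> \<A>) \<Longrightarrow> I (\<lambda>t. \<Sum>i\<in>S. F i t) = (\<Sum>i\<in>S. I (F i))"
  unfolding int_ds_def
  by (cases "finite S") (simp_all add: sum_distrib_right integral_sum curve_algebra_integrable)

lemma int_ds_mono: "f \<in> \<A> \<Longrightarrow> g \<in> \<A> \<Longrightarrow> (\<And>t. t \<in> {0..1} \<Longrightarrow> f t \<le> g t) \<Longrightarrow> I f \<le> I g"
  unfolding int_ds_def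
  by (intro integral_le curve_algebra_integrable) (auto intro: mult_right_mono less_imp_le[OF speed_pos])

lemma int_ds_nonneg: "f \<in> \<A> \<Longrightarrow> (\<And>t. t \<in> {0..1} \<Longrightarrow> 0 \<le> f t) \<Longrightarrow> 0 \<le> I f"
  using int_ds_mono[OF curve_algebra.const, of f 0] by (simp add: int_ds_def)

lemma int_ds_arc_deriv: "f \<in> \<A> \<Longrightarrow> I (D f) = 0"
proof -
  assume f: "f \<in> \<A>"
  have "(\<lambda>t. D f t * \<sigma> t) = deriv f"
    using speed_pos by (intro ext) (simp add: arc_deriv_def less_imp_neq[symmetric])
  moreover have "(deriv f has_integral (f 1 - f 0)) {0..1}"
    using f by (intro fundamental_theorem_of_calculus)
      (auto simp: has_real_derivative_iff_has_vector_derivative[symmetric]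
        intro!: has_field_derivative_at_within curve_algebra_has_real_derivative)
  moreover have "f 1 = f 0" using curve_algebra_periodic[OF f, of 0] by simp
  ultimately show ?thesis unfolding int_ds_def by (simp add: integral_unique)
qed

lemma int_ds_by_parts: "f \<in> \<A> \<Longrightarrow> g \<in> \<A> \<Longrightarrow> I (\<lambda>t. D f t * g t) = - I (\<lambda>t. f t * D g t)"
  using int_ds_arc_deriv[OF curve_algebra.mult, of f g]
  by (simp add: arc_deriv_mult int_ds_add curve_algebra_intros curve_algebra_arc_deriv eq_neg_iff_add_eq_0)

lemma int_ds_by_parts_funpow:
  "f \<in> \<A> \<Longrightarrow> g \<in> \<A> \<Longrightarrow> I (\<lambda>t. f t * (D ^^ n) g t) = (-1) ^ n * I (\<lambda>t. (D ^^ n) f t * g t)"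
proof (induction n arbitrary: f)
  case 0
  then show ?case by simp
next
  case (Suc n)
  have "I (\<lambda>t. f t * (D ^^ Suc n) g t) = - I (\<lambda>t. D f t * (D ^^ n) g t)"
    using int_ds_by_parts[OF Suc.prems(1) curve_algebra_funpow_arc_deriv[OF Suc.prems(2)]] by simp
  also have "\<dots> = (-1) ^ Suc n * I (\<lambda>t. (D ^^ Suc n) f t * g t)"
    using Suc.IH[OF curve_algebra_arc_deriv[OF Suc.prems(1)] Suc.prems(2)]
    by (simp add: funpow_Suc_right del: funpow.simps)
  finally show ?case .
qed

lemma int_ds_Cauchy_Schwarz:
  assumes "f \<in> \<A>" and "g \<in> \<A>"
  shows "I (\<lambda>t. f t * g t) \<le> L2_ds x y f * L2_ds x y g"
  unfolding L2_ds_def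
proof (rule le_sqrt_mult_sqrt_if_quadratic_nonneg)
  fix c
  have "0 \<le> I (\<lambda>t. (f t - c * g t)\<^sup>2)"
    using assms by (intro int_ds_nonneg curve_algebra_closed) simp_all
  also have "(\<lambda>t. (f t - c * g t)\<^sup>2) = (\<lambda>t. (f t)\<^sup>2 - (2 * c) * (f t * g t) + c\<^sup>2 * (g t)\<^sup>2)"
    by (simp add: fun_eq_iff power2_eq_square algebra_simps)
  also have "I \<dots> = I (\<lambda>t. (f t)\<^sup>2) - 2 * c * I (\<lambda>t. f t * g t) + c\<^sup>2 * I (\<lambda>t. (g t)\<^sup>2)"
    using assms by (simp only: int_ds_add int_ds_diff int_ds_cmult curve_algebra_closed)
  finally show "0 \<le> \<dots>" .
next
  show "0 \<le> I (\<lambda>t. (g t)\<^sup>2)"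
    using assms by (intro int_ds_nonneg curve_algebra_closed) simp_all
qed

section \<open>The scaling identity\<close>

abbreviation "\<kappa> \<equiv> curv_s x y"

lemma funpow_arc_deriv_curv_s: "(D ^^ i) (\<kappa> j) = \<kappa> (i + j)"
  by (simp add: curv_s_eq_funpow_arc_deriv funpow_add)

(* The variation of k_(s^j) when the curve moves with normal speed normal_part: the dilation
   about gamma(0) contributes -(j+1) k_(s^j), since k_(s^j) scales like lambda^(-(j+1)), and
   removing its tangential part contributes -tangent_part * k_(s^(j+1)). *)
definition curv_s_variation :: "nat \<Rightarrow> real \<Rightarrow> real" where
  "curv_s_variation j = (\<lambda>t. - (real j + 1) * \<kappa> j t - tangent_part t * \<kappa> (Suc j) t)"

lemma curve_algebra_curv_s_variation: "curv_s_variation j \<in> \<A>"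
  unfolding curv_s_variation_def by (intro curve_algebra_intros curve_algebra_curv_s curve_algebra_tangent_part)

lemma curv_s_variation_0: "curv_s_variation 0 = (\<lambda>t. D (D normal_part) t + (k t)\<^sup>2 * normal_part t)"
proof -
  have "D (D normal_part) = (\<lambda>t. - (\<kappa> 1 t * tangent_part t + k t * (1 + k t * normal_part t)))"
    by (simp add: arc_deriv_simps arc_deriv_normal_part arc_deriv_tangent_part curv_s_Suc_arc_deriv)
  then show ?thesis by (simp add: curv_s_variation_def algebra_simps power2_eq_square)
qed

lemma curv_s_variation_Suc:
  "curv_s_variation (Suc j) = (\<lambda>t. D (curv_s_variation j) t + k t * normal_part t * \<kappa> (Suc j) t)"
proof -
  have "D (curv_s_variation j) = (\<lambda>t. - (real j + 1) * \<kappa> (Suc j) t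
      - ((1 + k t * normal_part t) * \<kappa> (Suc j) t + tangent_part t * \<kappa> (Suc (Suc j)) t))"
    unfolding curv_s_variation_def
    by (simp add: arc_deriv_simps arc_deriv_tangent_part curv_s_Suc_arc_deriv)
  then show ?thesis by (simp add: curv_s_variation_def algebra_simps)
qed

lemma int_ds_mult_curv_s_variation_by_parts:
  assumes "f \<in> \<A>"
  shows "I (\<lambda>t. f t * curv_s_variation j t) = (-1) ^ j * I (\<lambda>t. (D ^^ j) f t * curv_s_variation 0 t)
    + (\<Sum>i<j. (-1) ^ i * I (\<lambda>t. (D ^^ i) f t * (k t * normal_part t * \<kappa> (j - i) t)))"
  using assms
proof (induction j arbitrary: f)
  case 0
  then show ?case by simp
next
  case (Suc j)
  have "I (\<lambda>t. f t * curv_s_variation (Suc j) t)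
      = I (\<lambda>t. f t * D (curv_s_variation j) t) + I (\<lambda>t. f t * (k t * normal_part t * \<kappa> (Suc j) t))"
    using Suc.prems
    by (simp add: curv_s_variation_Suc distrib_left int_ds_add curve_algebra_closed curve_algebra_curv_s_variation)
  also have "I (\<lambda>t. f t * D (curv_s_variation j) t) = - I (\<lambda>t. D f t * curv_s_variation j t)"
    using int_ds_by_parts[OF Suc.prems curve_algebra_curv_s_variation] by simp
  finally show ?case
    using Suc.IH[OF curve_algebra_arc_deriv[OF Suc.prems]]
    by (simp add: sum.lessThan_Suc_shift funpow_Suc_right sum_negf del: funpow.simps sum.lessThan_Suc)
qed

lemma int_ds_curv_s_mult_curv_s_variation_diagonal:
  "I (\<lambda>t. \<kappa> j t * curv_s_variation j t)
     = 1/2 * I (\<lambda>t. k t * normal_part t * (\<kappa> j t)\<^sup>2) - (real j + 1/2) * I (\<lambda>t. (\<kappa> j t)\<^sup>2)"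
proof -
  have "D (\<lambda>t. tangent_part t * (\<kappa> j t)\<^sup>2) = (\<lambda>t. (\<kappa> j t)\<^sup>2 + k t * normal_part t * (\<kappa> j t)\<^sup>2
      + 2 * (tangent_part t * \<kappa> j t * \<kappa> (Suc j) t))"
    by (simp add: power2_eq_square arc_deriv_simps arc_deriv_tangent_part curv_s_Suc_arc_deriv algebra_simps)
  then have "I (\<lambda>t. (\<kappa> j t)\<^sup>2) + I (\<lambda>t. k t * normal_part t * (\<kappa> j t)\<^sup>2)
      + 2 * I (\<lambda>t. tangent_part t * \<kappa> j t * \<kappa> (Suc j) t) = 0"
    using int_ds_arc_deriv[of "\<lambda>t. tangent_part t * (\<kappa> j t)\<^sup>2"]
    by (simp add: int_ds_add int_ds_cmult curve_algebra_closed)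
  moreover have "I (\<lambda>t. \<kappa> j t * curv_s_variation j t)
      = - (real j + 1) * I (\<lambda>t. (\<kappa> j t)\<^sup>2) - I (\<lambda>t. tangent_part t * \<kappa> j t * \<kappa> (Suc j) t)"
  proof -
    have "(\<lambda>t. \<kappa> j t * curv_s_variation j t)
        = (\<lambda>t. - (real j + 1) * (\<kappa> j t)\<^sup>2 - tangent_part t * \<kappa> j t * \<kappa> (Suc j) t)"
      by (simp add: curv_s_variation_def algebra_simps power2_eq_square)
    then show ?thesis
      by (simp only: int_ds_diff int_ds_cmult curve_algebra_closed)
  qed
  ultimately show ?thesis by (simp add: algebra_simps)
qed

lemma int_ds_curv_s_mult_curv_s_variation_0:
  "I (\<lambda>t. \<kappa> j t * curv_s_variation 0 t)
     = I (\<lambda>t. \<kappa> (j + 2) t * normal_part t) + I (\<lambda>t. (k t)\<^sup>2 * normal_part t * \<kappa> j t)"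
proof -
  have "I (\<lambda>t. \<kappa> j t * (D ^^ 2) normal_part t) = I (\<lambda>t. \<kappa> (j + 2) t * normal_part t)"
    using int_ds_by_parts_funpow[OF curve_algebra_curv_s curve_algebra_normal_part, of j 2]
    by (simp add: funpow_arc_deriv_curv_s add.commute)
  then show ?thesis
    by (simp add: curv_s_variation_0 distrib_left int_ds_add curve_algebra_closed numeral_2_eq_2 mult_ac)
qed

lemma curve_algebra_Kop: "Kop m x y \<in> \<A>"
  unfolding Kop_def[abs_def] by (intro curve_algebra_closed)

theorem int_ds_Kop_mult_normal_part:
  "I (\<lambda>t. Kop m x y t * normal_part t) = (2 * real m + 1) * energy m x y"
proof -
  define c where "c i = I (\<lambda>t. k t * normal_part t * \<kappa> (m - i) t * \<kappa> (m + i) t)" for i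
  define P where "P = I (\<lambda>t. \<kappa> (2 * m + 2) t * normal_part t)"
  have variation: "(-1) ^ m * P + (\<Sum>i\<le>m. (-1) ^ i * c i) = c 0 / 2 - (real m + 1/2) * I (\<lambda>t. (\<kappa> m t)\<^sup>2)"
  proof -
    have "I (\<lambda>t. \<kappa> (m + m) t * curv_s_variation 0 t) = P + c m"
      using int_ds_curv_s_mult_curv_s_variation_0[of "m + m"]
      by (simp add: P_def c_def mult_2 mult_2_right mult_ac power2_eq_square)
    moreover have "(\<Sum>i<m. (-1) ^ i * I (\<lambda>t. (D ^^ i) (\<kappa> m) t * (k t * normal_part t * \<kappa> (m - i) t)))
        = (\<Sum>i<m. (-1) ^ i * c i)"
      by (simp add: funpow_arc_deriv_curv_s c_def add.commute mult_ac)
    ultimately have "I (\<lambda>t. \<kappa> m t * curv_s_variation m t) = (-1) ^ m * (P + c m) + (\<Sum>i<m. (-1) ^ i * c i)"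
      using int_ds_mult_curv_s_variation_by_parts[OF curve_algebra_curv_s, of m m]
      by (simp add: funpow_arc_deriv_curv_s)
    moreover have "c 0 = I (\<lambda>t. k t * normal_part t * (\<kappa> m t)\<^sup>2)"
      by (simp add: c_def power2_eq_square mult.assoc)
    ultimately show ?thesis
      using int_ds_curv_s_mult_curv_s_variation_diagonal[of m]
      by (simp add: lessThan_Suc_atMost[symmetric] algebra_simps)
  qed
  have expansion: "I (\<lambda>t. Kop m x y t * normal_part t)
      = (-1) ^ (m + 1) * P - c 0 / 2 + (\<Sum>r = 1..m. (-1) ^ (r + 1) * c r)"
  proof -
    have "(\<lambda>t. Kop m x y t * normal_part t) = (\<lambda>t. (-1) ^ (m + 1) * (\<kappa> (2 * m + 2) t * normal_part t)
        + (-1/2) * (k t * normal_part t * \<kappa> m t * \<kappa> m t)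
        + (\<Sum>r = 1..m. (-1) ^ (r + 1) * (k t * normal_part t * \<kappa> (m - r) t * \<kappa> (m + r) t)))"
      by (simp add: Kop_def fun_eq_iff algebra_simps power2_eq_square sum_distrib_left sum_distrib_right)
    then show ?thesis
      unfolding P_def c_def by (simp only: int_ds_add int_ds_cmult int_ds_sum curve_algebra_closed) simp
  qed
  have "(\<Sum>i\<le>m. (-1) ^ i * c i) = c 0 - (\<Sum>r = 1..m. (-1) ^ (r + 1) * c r)"
    by (simp add: atMost_atLeast0 sum.atLeast_Suc_atMost sum_negf[symmetric])
  then show ?thesis
    using variation expansion by (simp add: energy_def algebra_simps)
qed

section \<open>The estimate\<close>

abbreviation "L \<equiv> curve_length x y"

lemma curve_length_eq: "L = integral {0..1} \<sigma>"
  by (simp add: curve_length_def int_ds_def)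

lemma speed_integrable: "\<sigma> integrable_on {a..b}"
  by (intro integrable_continuous_interval curve_algebra_continuous_on curve_algebra_speed)

lemma unit_projection_le_curve_length:
  assumes unit: "a\<^sup>2 + b\<^sup>2 = 1" and t: "t \<in> {0..1}"
  shows "a * (x t - x 0) + b * (y t - y 0) \<le> L"
proof -
  let ?g = "\<lambda>s. a * x s + b * y s"
  have "(?g has_real_derivative a * deriv x s + b * deriv y s) (at s)" for s
    using curve_algebra_has_real_derivative[OF curve_algebra_x]
      curve_algebra_has_real_derivative[OF curve_algebra_y]
    by (auto intro!: derivative_eq_intros)
  then have "((\<lambda>s. a * deriv x s + b * deriv y s) has_integral (?g t - ?g 0)) {0..t}"
    using t by (intro fundamental_theorem_of_calculus)
      (auto simp: has_real_derivative_iff_has_vector_derivative[symmetric] intro: has_field_derivative_at_within)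
  moreover have "(\<sigma> has_integral integral {0..t} \<sigma>) {0..t}"
    using speed_integrable by (rule integrable_integral)
  moreover have "a * deriv x s + b * deriv y s \<le> \<sigma> s" for s
    unfolding speed_def by (rule unit_combination_le_sqrt[OF unit])
  ultimately have "?g t - ?g 0 \<le> integral {0..t} \<sigma>"
    by (rule has_integral_le)
  also have "\<dots> \<le> integral {0..1} \<sigma>"
    using t speed_pos by (intro integral_subset_le speed_integrable) (auto intro: less_imp_le)
  finally show ?thesis unfolding curve_length_eq by (simp add: algebra_simps)
qed

lemma abs_normal_part_le: "t \<in> {0..1} \<Longrightarrow> \<bar>normal_part t\<bar> \<le> L"
  using unit_projection_le_curve_length[of "- D y t" "D x t" t]
    unit_projection_le_curve_length[of "D y t" "- D x t" t] unit_tangent[of t]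
  by (simp add: normal_part_def abs_le_iff algebra_simps)

lemma L2_ds_normal_part_le: "L2_ds x y normal_part \<le> L powr (3/2)"
proof -
  have "L \<ge> 0"
    using int_ds_nonneg[OF curve_algebra.const, of 1] by (simp add: curve_length_def)
  have "I (\<lambda>t. (normal_part t)\<^sup>2) \<le> I (\<lambda>t. L\<^sup>2 * 1)"
    using abs_normal_part_le \<open>L \<ge> 0\<close>
    by (intro int_ds_mono curve_algebra_closed) (simp_all add: abs_le_square_iff[symmetric])
  also have "\<dots> = L ^ 3"
    by (simp only: int_ds_cmult flip: curve_length_def) (simp add: power2_eq_square power3_eq_cube)
  also have "\<dots> = (L powr (3/2))\<^sup>2"
    using \<open>L \<ge> 0\<close> by (simp add: powr_half_sqrt_powr)
  finally show ?thesis
    unfolding L2_ds_def using real_sqrt_le_mono by fastforce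
qed

theorem energy_le_curve_length_L2_ds_Kop:
  "energy m x y \<le> 1 / (2 * real m + 1) * L powr (3/2) * L2_ds x y (Kop m x y)"
proof -
  have "(2 * real m + 1) * energy m x y = I (\<lambda>t. Kop m x y t * normal_part t)"
    by (rule int_ds_Kop_mult_normal_part[symmetric])
  also have "\<dots> \<le> L2_ds x y (Kop m x y) * L2_ds x y normal_part"
    by (intro int_ds_Cauchy_Schwarz curve_algebra_Kop curve_algebra_normal_part)
  also have "\<dots> \<le> L2_ds x y (Kop m x y) * L powr (3/2)"
    using curve_algebra_Kop
    by (intro mult_left_mono L2_ds_normal_part_le) (simp add: L2_ds_def int_ds_nonneg curve_algebra_closed)
  finally show ?thesis
    by (simp add: field_simps)
qed

end

theorem mainTheorem6:
  fixes m :: nat and x y :: "real \<Rightarrow> real"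
  assumes "m \<ge> 1"
    and "smooth_closed_immersed x y"
  shows "energy m x y \<le> 1 / (2 * real m + 1) * curve_length x y powr (3/2) * L2_ds x y (Kop m x y)"
  using closed_curve.energy_le_curve_length_L2_ds_Kop[OF closed_curve.intro[OF assms(2)]] .

end
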